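(* For any $\mathrm{LP}^{\mathrm{MLN}}$ program $\Pi$, the map \[ \phi(I)=I\cup\{\mathtt{sat}(i,w_i,\mathbf c) : w_i:\mathit{Head}_i(\mathbf c)\leftarrow\mathit{Body}_i(\mathbf c)\in Gr(\Pi),\ I\models \mathit{Body}_i(\mathbf c)\rightarrow \mathit{Head}_i(\mathbf c)\} \] is a one-to-one correspondence between $\mathrm{SM}[\Pi]$ and the set of stable models of $\mathsf{lpmln2asp^{rwd}}(\Pi)$. Furthermore, for every $I\in\mathrm{SM}[\Pi]$, \[ W_\Pi(I)=\exp\Big(\sum_{\mathtt{sat}(i,w_i,\mathbf c)\in\phi(I)} w_i\Big). \] Also, $\phi$ restricts to a one-to-one correspondence between the most probable stable models of $\Pi$ and the optimal stable models of $\mathsf{lpmln2asp^{rwd}}(\Pi)$.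
   Context: An $\mathrm{LP}^{\mathrm{MLN}}$ program is a finite set of weighted rules $w_i:\mathit{Head}_i(\mathbf x)\leftarrow \mathit{Body}_i(\mathbf x)$, indexed by $i$, where $\mathbf x$ is the list of global variables, $\mathit{Head}_i$ is a possibly empty disjunction of atoms, $\mathit{Body}_i$ a conjunction of literals, and $w_i$ is a real number or the symbol $\alpha$ (infinite weight). The Herbrand universe is finite; $Gr(\Pi)$ replaces global variables by all tuples $\mathbf c$ of the universe. For ground $\Pi$ and interpretation $I$: $\overline{\Pi}$ drops weights, $\Pi_I$ is the set of rules satisfied by $I$, $\mathrm{SM}[\Pi]=\{I: I \text{ stable model of }\overline{\Pi_I}\}$, $W_\Pi(I)=\exp(\sum_{w:R\in\Pi_I}w)$ if $I\in\mathrm{SM}[\Pi]$ and $0$ otherwise, $P_\Pi(I)=\lim_{\alpha\to\infty}W_\Pi(I)/\sum_{J\in\mathrm{SM}[\Pi]}W_\Pi(J)$; the most probable stable models are those $I$ maximizing $P_\Pi(I)$ (equivalently, lexicographically maximizing first the number of satisfied hard rules among $I\in\mathrm{SM}[\Pi]$, then the total weight of satisfied soft rules). Weak constraints: a weak constraint is $:\sim F\ [\mathit{Weight}@\mathit{Level}]$ with $F$ a conjunction of literals, $\mathit{Weight}$ real, $\mathit{Level}$ a nonnegative integer (optionally with a tuple of terms distinguishing instances). For $\Pi=\Pi_1\cup\Pi_2$ with $\Pi_1$ weak-constraint-free and $\Pi_2$ ground weak constraints, the stable models of $\Pi$ are those of $\Pi_1$; the penalty of a stable model $I$ at level $l$ is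 $\sum_{:\sim F[w@l]\in\Pi_2,\ I\models F} w$; $I$ is dominated by $I'$ if for some $l$ the penalty of $I'$ at level $l$ is smaller than that of $I$ and the penalties agree at all levels $k>l$; $I$ is optimal if it is not dominated by any stable model. $\mathsf{lpmln2asp^{rwd}}(\Pi)$ replaces each rule $w_i:\mathit{Head}_i(\mathbf x)\leftarrow\mathit{Body}_i(\mathbf x)$ by $\mathtt{sat}(i,w_i,\mathbf x)\leftarrow \mathit{Head}_i(\mathbf x)$; $\mathtt{sat}(i,w_i,\mathbf x)\leftarrow \mathtt{not}\ \mathit{Body}_i(\mathbf x)$; $\mathit{Head}_i(\mathbf x)\leftarrow \mathit{Body}_i(\mathbf x),\ \mathtt{not}\ \mathtt{not}\ \mathtt{sat}(i,w_i,\mathbf x)$; $:\sim \mathtt{sat}(i,w_i,\mathbf x).\ [-w'_i@l, i,\mathbf x]$, where $w'_i=1,\ l=1$ if $w_i=\alpha$, and $w'_i=w_i,\ l=0$ otherwise; $\mathtt{sat}$ is a fresh predicate. In the weight formula, hard weights are kept as the symbol $\alpha$. *)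

theory Defs
  imports Complex_Main
begin

datatype 'a fm = Atom 'a | Bot | Conj "'a fm" "'a fm" | Disj "'a fm" "'a fm" | Impl "'a fm" "'a fm"

fun models :: "'a set \<Rightarrow> 'a fm \<Rightarrow> bool" where
  "models I (Atom a) = (a \<in> I)"
| "models I Bot = False"
| "models I (Conj F G) = (models I F \<and> models I G)"
| "models I (Disj F G) = (models I F \<or> models I G)"
| "models I (Impl F G) = (models I F \<longrightarrow> models I G)"

definition Neg :: "'a fm \<Rightarrow> 'a fm" where "Neg F = Impl F Bot"
definition Top :: "'a fm" where "Top = Neg Bot"

definition big_and :: "'a fm list \<Rightarrow> 'a fm" where "big_and Fs = foldr Conj Fs Top"
definition big_or :: "'a fm list \<Rightarrow> 'a fm" where "big_or Fs = foldr Disj Fs Bot"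

fun reduct :: "'a set \<Rightarrow> 'a fm \<Rightarrow> 'a fm" where
  "reduct I (Atom a) = (if a \<in> I then Atom a else Bot)"
| "reduct I Bot = Bot"
| "reduct I (Conj F G) = (if models I (Conj F G) then Conj (reduct I F) (reduct I G) else Bot)"
| "reduct I (Disj F G) = (if models I (Disj F G) then Disj (reduct I F) (reduct I G) else Bot)"
| "reduct I (Impl F G) = (if models I (Impl F G) then Impl (reduct I F) (reduct I G) else Bot)"

definition stable_model :: "'a fm set \<Rightarrow> 'a set \<Rightarrow> bool" where
  "stable_model \<Pi> I \<longleftrightarrow> (\<forall>F\<in>\<Pi>. models I F) \<and> \<not> (\<exists>J. J \<subset> I \<and> (\<forall>F\<in>\<Pi>. models J (reduct I F)))"

text \<open>A ground weak constraint is (body formula, weight, level, distinguishing term tuple).\<close>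
definition penalty :: "('a fm \<times> real \<times> nat \<times> 't) set \<Rightarrow> 'a set \<Rightarrow> nat \<Rightarrow> real" where
  "penalty WC I l = (\<Sum>(F, w, l', t) \<in> {(F, w, l', t). (F, w, l', t) \<in> WC \<and> l' = l \<and> models I F}. w)"

definition dominated_by :: "('a fm \<times> real \<times> nat \<times> 't) set \<Rightarrow> 'a set \<Rightarrow> 'a set \<Rightarrow> bool" where
  "dominated_by WC I I' \<longleftrightarrow>
     (\<exists>l. penalty WC I' l < penalty WC I l \<and> (\<forall>k>l. penalty WC I' k = penalty WC I k))"

definition optimal_models :: "'a fm set \<Rightarrow> ('a fm \<times> real \<times> nat \<times> 't) set \<Rightarrow> 'a set set" where
  "optimal_models \<Pi> WC = {I. stable_model \<Pi> I \<and> \<not> (\<exists>I'. stable_model \<Pi> I' \<and> dominated_by WC I I')}"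

datatype weight = Soft real | Hard

text \<open>Value of a weight, with the hard weight alpha instantiated by the real number a.\<close>
fun wval :: "real \<Rightarrow> weight \<Rightarrow> real" where
  "wval a (Soft r) = r"
| "wval a Hard = a"

datatype 'a lit = Pos 'a | NegL 'a

fun lit_fm :: "'a lit \<Rightarrow> 'a fm" where
  "lit_fm (Pos a) = Atom a"
| "lit_fm (NegL a) = Neg (Atom a)"

text \<open>A (non-ground) weighted rule: its weight, the number of global variables, and
  for each tuple of constants c the ground head atoms (a disjunction) and body literals (a conjunction).\<close>
record ('a, 'c) lrule =
  wt :: weight
  arity :: nat
  head :: "'c list \<Rightarrow> 'a list"
  body :: "'c list \<Rightarrow> 'a lit list"

type_synonym ('a, 'c) lprog = "('a, 'c) lrule list"

text \<open>Ground instances (i, c) of the program over the Herbrand universe U.\<close>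
definition instances :: "'c set \<Rightarrow> ('a, 'c) lprog \<Rightarrow> (nat \<times> 'c list) set" where
  "instances U P = {(i, c). i < length P \<and> c \<in> lists U \<and> length c = arity (P ! i)}"

definition head_fm :: "('a, 'c) lprog \<Rightarrow> nat \<times> 'c list \<Rightarrow> 'a fm" where
  "head_fm P k = big_or (map Atom (head (P ! fst k) (snd k)))"

definition body_fm :: "('a, 'c) lprog \<Rightarrow> nat \<times> 'c list \<Rightarrow> 'a fm" where
  "body_fm P k = big_and (map lit_fm (body (P ! fst k) (snd k)))"

definition rule_fm :: "('a, 'c) lprog \<Rightarrow> nat \<times> 'c list \<Rightarrow> 'a fm" where
  "rule_fm P k = Impl (body_fm P k) (head_fm P k)"

text \<open>Instances of Gr(P) satisfied by I (this is Pi_I, indexed by instance).\<close>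
definition sat_instances :: "'c set \<Rightarrow> ('a, 'c) lprog \<Rightarrow> 'a set \<Rightarrow> (nat \<times> 'c list) set" where
  "sat_instances U P I = {k \<in> instances U P. models I (rule_fm P k)}"

definition lpmln_SM :: "'c set \<Rightarrow> ('a, 'c) lprog \<Rightarrow> 'a set set" where
  "lpmln_SM U P = {I. stable_model (rule_fm P ` sat_instances U P I) I}"

text \<open>W_Pi(I) as a function of the value a of alpha.\<close>
definition lpmln_W :: "'c set \<Rightarrow> ('a, 'c) lprog \<Rightarrow> real \<Rightarrow> 'a set \<Rightarrow> real" where
  "lpmln_W U P a I =
     (if I \<in> lpmln_SM U P then exp (\<Sum>k\<in>sat_instances U P I. wval a (wt (P ! fst k))) else 0)"

definition lpmln_P :: "'c set \<Rightarrow> ('a, 'c) lprog \<Rightarrow> 'a set \<Rightarrow> real" where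
  "lpmln_P U P I = Lim at_top (\<lambda>a. lpmln_W U P a I / (\<Sum>J\<in>lpmln_SM U P. lpmln_W U P a J))"

definition most_probable :: "'c set \<Rightarrow> ('a, 'c) lprog \<Rightarrow> 'a set set" where
  "most_probable U P = {I \<in> lpmln_SM U P. \<forall>J \<in> lpmln_SM U P. lpmln_P U P J \<le> lpmln_P U P I}"

datatype ('a, 'c) xatom = Orig 'a | Sat nat weight "'c list"

definition sat_atom :: "('a, 'c) lprog \<Rightarrow> nat \<times> 'c list \<Rightarrow> ('a, 'c) xatom" where
  "sat_atom P k = Sat (fst k) (wt (P ! fst k)) (snd k)"

definition rwd_inst_rules :: "('a, 'c) lprog \<Rightarrow> nat \<times> 'c list \<Rightarrow> ('a, 'c) xatom fm set" where
  "rwd_inst_rules P k =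
     { Impl (map_fm Orig (head_fm P k)) (Atom (sat_atom P k)),
       Impl (Neg (map_fm Orig (body_fm P k))) (Atom (sat_atom P k)),
       Impl (Conj (map_fm Orig (body_fm P k)) (Neg (Neg (Atom (sat_atom P k))))) (map_fm Orig (head_fm P k)) }"

definition rwd_rules :: "'c set \<Rightarrow> ('a, 'c) lprog \<Rightarrow> ('a, 'c) xatom fm set" where
  "rwd_rules U P = (\<Union>k\<in>instances U P. rwd_inst_rules P k)"

fun wc_weight :: "weight \<Rightarrow> real" where
  "wc_weight (Soft r) = - r"
| "wc_weight Hard = - 1"

fun wc_level :: "weight \<Rightarrow> nat" where
  "wc_level (Soft r) = 0"
| "wc_level Hard = 1"

text \<open>Weak constraints  :~ sat(i,w_i,c). [-w'_i @ l, i, c].\<close>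
definition rwd_wc :: "'c set \<Rightarrow> ('a, 'c) lprog \<Rightarrow> (('a, 'c) xatom fm \<times> real \<times> nat \<times> (nat \<times> 'c list)) set" where
  "rwd_wc U P = (\<lambda>k. (Atom (sat_atom P k), wc_weight (wt (P ! fst k)), wc_level (wt (P ! fst k)), k))
                   ` instances U P"

definition phi :: "'c set \<Rightarrow> ('a, 'c) lprog \<Rightarrow> 'a set \<Rightarrow> ('a, 'c) xatom set" where
  "phi U P I = Orig ` I \<union> sat_atom P ` sat_instances U P I"

end

(*
  The first two translated rules force sat(i,w_i,c) into a model exactly when the ground rule is
  satisfied, and the third re-imposes the rule only where sat(i,w_i,c) holds. Hence the reduct of a
  translated instance acts on the original atoms like the reduct of Pi_I, and the stable models J of
  the translation are exactly the sets phi(I) with I = Orig^-1(J) in SM[Pi].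

  Write W(I) = exp(alpha * h(I) + s(I)), with h(I) the number of hard rules and s(I) the total weight
  of the soft rules satisfied by I. As alpha tends to infinity the normalised weights converge to a
  distribution supported on the models of maximal h and proportional to exp(s) there, so I is most
  probable iff (h(I), s(I)) is lexicographically maximal. The weak constraints penalise -h at level 1
  and -s at level 0, so dominance among stable models of the translation is the same order.
*)

theory Submission
  imports Defs "HOL-Library.Product_Lexorder" "HOL-Real_Asymp.Real_Asymp"
begin

section \<open>Reducts\<close>

lemma models_Neg [simp]: "models I (Neg F) \<longleftrightarrow> \<not> models I F"
  by (simp add: Neg_def)

lemma models_map_fm: "models K (map_fm f F) \<longleftrightarrow> models (f -` K) F"
  by (induction F) auto

lemma models_reduct_map_fm:
  "models K (reduct J (map_fm f F)) \<longleftrightarrow> models (f -` K) (reduct (f -` J) F)"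
  by (induction F) (auto simp: models_map_fm)

lemma models_reduct_imp_models: "models K (reduct J F) \<Longrightarrow> models J F"
  by (induction F) (auto split: if_splits)

lemma models_reduct_cong:
  "(\<And>a. a \<in> set_fm F \<Longrightarrow> a \<in> K \<longleftrightarrow> a \<in> J) \<Longrightarrow> models K (reduct J F) \<longleftrightarrow> models J F"
  by (induction F) auto

lemma models_reduct_self: "models J (reduct J F) \<longleftrightarrow> models J F"
  by (rule models_reduct_cong) simp

lemma models_reduct_Neg [simp]: "models K (reduct J (Neg F)) \<longleftrightarrow> \<not> models J F"
  using models_reduct_imp_models[of K J F] by (auto simp: Neg_def)

lemma models_reduct_Conj:
  "models K (reduct J (Conj F G)) \<longleftrightarrow> models K (reduct J F) \<and> models K (reduct J G)"
  using models_reduct_imp_models[of K J F] models_reduct_imp_models[of K J G] by auto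

section \<open>Stable models of the translation\<close>

lemma sat_atom_eq_iff [simp]: "sat_atom P k = sat_atom P k' \<longleftrightarrow> k = k'"
  by (auto simp: sat_atom_def prod_eq_iff)

lemma sat_atom_neq_Orig [simp]: "sat_atom P k \<noteq> Orig a" "Orig a \<noteq> sat_atom P k"
  by (simp_all add: sat_atom_def)

lemma Orig_vimage_phi [simp]: "Orig -` phi U P I = I"
  by (auto simp: phi_def)

lemma sat_atom_in_phi_iff [simp]: "sat_atom P k \<in> phi U P I \<longleftrightarrow> k \<in> sat_instances U P I"
  by (auto simp: phi_def)

lemma inj_phi: "inj (phi U P)"
  by (rule inj_on_inverseI[of _ "vimage Orig"]) simp

lemma models_rwd_inst_rules_iff:
  "(\<forall>F\<in>rwd_inst_rules P k. models J F) \<longleftrightarrow>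
     (sat_atom P k \<in> J \<longleftrightarrow> models (Orig -` J) (rule_fm P k))"
  by (auto simp: rwd_inst_rules_def rule_fm_def models_map_fm)

lemma models_reduct_rwd_inst_rules_iff:
  assumes "\<forall>F\<in>rwd_inst_rules P k. models J F"
  shows "(\<forall>F\<in>rwd_inst_rules P k. models K (reduct J F)) \<longleftrightarrow>
     (models (Orig -` K) (reduct (Orig -` J) (head_fm P k)) \<longrightarrow> sat_atom P k \<in> K) \<and>
     (\<not> models (Orig -` J) (body_fm P k) \<longrightarrow> sat_atom P k \<in> K) \<and>
     (sat_atom P k \<in> J \<and> models (Orig -` K) (reduct (Orig -` J) (body_fm P k)) \<longrightarrow>
        models (Orig -` K) (reduct (Orig -` J) (head_fm P k)))"
  using assms models_reduct_imp_models[of "Orig -` K" "Orig -` J" "head_fm P k"]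
    models_reduct_imp_models[of "Orig -` K" "Orig -` J" "body_fm P k"]
  by (auto simp: rwd_inst_rules_def models_map_fm models_reduct_map_fm models_reduct_Conj)

lemma models_rwd_inst_rules_phi:
  "k \<in> instances U P \<Longrightarrow> \<forall>F\<in>rwd_inst_rules P k. models (phi U P I) F"
  unfolding models_rwd_inst_rules_iff by (simp add: sat_instances_def)

lemma models_rwd_rules_iff:
  "(\<forall>F\<in>rwd_rules U P. models J F) \<longleftrightarrow>
     (\<forall>k\<in>instances U P. sat_atom P k \<in> J \<longleftrightarrow> models (Orig -` J) (rule_fm P k))"
  by (auto simp: rwd_rules_def models_rwd_inst_rules_iff[symmetric])

lemma models_rwd_rules_phi: "\<forall>F\<in>rwd_rules U P. models (phi U P I) F"
  using models_rwd_inst_rules_phi unfolding rwd_rules_def by blast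

lemma stable_model_rwd_rules_phi:
  assumes "I \<in> lpmln_SM U P"
  shows "stable_model (rwd_rules U P) (phi U P I)"
  unfolding stable_model_def
proof (intro conjI notI models_rwd_rules_phi)
  assume "\<exists>K. K \<subset> phi U P I \<and> (\<forall>F\<in>rwd_rules U P. models K (reduct (phi U P I) F))"
  then obtain K where K: "K \<subset> phi U P I"
    and K_red: "\<And>k. k \<in> instances U P \<Longrightarrow> \<forall>F\<in>rwd_inst_rules P k. models K (reduct (phi U P I) F)"
    by (auto simp: rwd_rules_def)
  have red: "(models (Orig -` K) (reduct I (head_fm P k)) \<longrightarrow> sat_atom P k \<in> K) \<and>
      (\<not> models I (body_fm P k) \<longrightarrow> sat_atom P k \<in> K) \<and>
      (k \<in> sat_instances U P I \<and> models (Orig -` K) (reduct I (body_fm P k)) \<longrightarrow>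
        models (Orig -` K) (reduct I (head_fm P k)))" if "k \<in> instances U P" for k
    using K_red[OF that] models_reduct_rwd_inst_rules_iff[OF models_rwd_inst_rules_phi[OF that]]
    by simp
  have "Orig -` K \<subseteq> I"
    using vimage_mono[of K "phi U P I" Orig] K by simp
  moreover have "Orig -` K \<noteq> I"
  proof
    assume K_Orig: "Orig -` K = I"
    obtain x where x: "x \<in> phi U P I" "x \<notin> K"
      using K by blast
    have "Orig ` I \<subseteq> K"
      using K_Orig by blast
    then obtain k where k: "k \<in> sat_instances U P I" "sat_atom P k \<notin> K"
      using x by (auto simp: phi_def)
    have k_inst: "k \<in> instances U P"
      and "models I (head_fm P k) \<or> \<not> models I (body_fm P k)"
      using k(1) by (auto simp: sat_instances_def rule_fm_def)
    then show False
      using red[OF k_inst] k(2) unfolding K_Orig models_reduct_self by blast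
  qed
  moreover have "\<forall>F\<in>rule_fm P ` sat_instances U P I. models (Orig -` K) (reduct I F)"
    using red by (auto simp: sat_instances_def rule_fm_def)
  ultimately show False
    using assms unfolding lpmln_SM_def stable_model_def by blast
qed

lemma stable_model_rwd_rules_eq_phi:
  assumes "stable_model (rwd_rules U P) J"
  shows "J = phi U P (Orig -` J)"
proof -
  let ?I = "Orig -` J"
  have models_J: "\<forall>F\<in>rwd_rules U P. models J F"
    and minimal: "\<not> (\<exists>K. K \<subset> J \<and> (\<forall>F\<in>rwd_rules U P. models K (reduct J F)))"
    using assms by (simp_all add: stable_model_def)
  have sat_iff: "sat_atom P k \<in> J \<longleftrightarrow> models ?I (rule_fm P k)" if "k \<in> instances U P" for k
    using models_J that by (simp add: models_rwd_rules_iff)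
  have "phi U P ?I \<subseteq> J"
    using sat_iff by (auto simp: phi_def sat_instances_def)
  moreover have "models (phi U P ?I) (reduct J F)" if F: "F \<in> rwd_rules U P" for F
  proof -
    obtain k where k: "k \<in> instances U P" and F_k: "F \<in> rwd_inst_rules P k"
      using F unfolding rwd_rules_def by blast
    have "\<forall>F\<in>rwd_inst_rules P k. models J F"
      using models_J k unfolding rwd_rules_def by blast
    then show ?thesis
      using F_k sat_iff[OF k] models_reduct_rwd_inst_rules_iff[of P k J "phi U P ?I"]
      by (auto simp: models_reduct_self sat_instances_def k rule_fm_def)
  qed
  ultimately show ?thesis
    using minimal by blast
qed

lemma stable_model_rwd_rules_imp_lpmln_SM:
  assumes "stable_model (rwd_rules U P) J"
  shows "Orig -` J \<in> lpmln_SM U P"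
  unfolding lpmln_SM_def stable_model_def
proof (intro CollectI conjI notI)
  let ?I = "Orig -` J"
  have models_J: "\<forall>F\<in>rwd_rules U P. models J F"
    and minimal: "\<not> (\<exists>K. K \<subset> J \<and> (\<forall>F\<in>rwd_rules U P. models K (reduct J F)))"
    using assms by (simp_all add: stable_model_def)
  have sat_iff: "sat_atom P k \<in> J \<longleftrightarrow> k \<in> sat_instances U P ?I" if "k \<in> instances U P" for k
    using models_J that by (simp add: models_rwd_rules_iff sat_instances_def)
  show "\<forall>F\<in>rule_fm P ` sat_instances U P ?I. models ?I F"
    by (auto simp: sat_instances_def)
  assume "\<exists>I'. I' \<subset> ?I \<and> (\<forall>F\<in>rule_fm P ` sat_instances U P ?I. models I' (reduct ?I F))"
  then obtain I' where I': "I' \<subset> ?I"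
    and I'_red: "\<And>k. k \<in> sat_instances U P ?I \<Longrightarrow> models I' (reduct ?I (rule_fm P k))"
    by blast
  define K where "K = Orig ` I' \<union> (J - range Orig)"
  have Orig_K: "Orig -` K = I'"
    by (auto simp: K_def)
  have "K \<subset> J"
    using I' by (auto simp: K_def)
  moreover have "models K (reduct J F)" if F: "F \<in> rwd_rules U P" for F
  proof -
    obtain k where k: "k \<in> instances U P" and F_k: "F \<in> rwd_inst_rules P k"
      using F unfolding rwd_rules_def by blast
    have "\<forall>F\<in>rwd_inst_rules P k. models J F"
      using models_J k unfolding rwd_rules_def by blast
    moreover have "sat_atom P k \<in> K \<longleftrightarrow> sat_atom P k \<in> J"
      by (auto simp: K_def)
    ultimately show ?thesis
      using F_k k sat_iff[OF k] I'_red[of k] models_reduct_rwd_inst_rules_iff[of P k J K]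
        models_reduct_imp_models[of I' ?I "head_fm P k"]
      by (auto simp: Orig_K sat_instances_def rule_fm_def)
  qed
  ultimately show False
    using minimal by blast
qed

lemma stable_models_rwd_rules_eq: "{J. stable_model (rwd_rules U P) J} = phi U P ` lpmln_SM U P"
  using stable_model_rwd_rules_phi stable_model_rwd_rules_eq_phi stable_model_rwd_rules_imp_lpmln_SM
  by blast

lemma bij_betw_phi_stable_models:
  "bij_betw (phi U P) (lpmln_SM U P) {J. stable_model (rwd_rules U P) J}"
  by (simp add: bij_betw_def stable_models_rwd_rules_eq inj_on_subset[OF inj_phi])

lemma finite_instances: "finite U \<Longrightarrow> finite (instances U P)"
proof -
  assume "finite U"
  then have "finite (SIGMA i:{..<length P}. {c. set c \<subseteq> U \<and> length c = arity (P ! i)})"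
    by (intro finite_SigmaI finite_lists_length_eq) auto
  then show ?thesis
    by (rule finite_subset[rotated]) (auto simp: instances_def)
qed

lemma finite_sat_instances: "finite U \<Longrightarrow> finite (sat_instances U P I)"
  using finite_instances by (rule finite_subset[rotated]) (auto simp: sat_instances_def)

lemma set_fm_big_or_Atom: "set_fm (big_or (map Atom xs)) = set xs"
  by (induction xs) (auto simp: big_or_def)

lemma lpmln_SM_subset_head_atoms:
  assumes "I \<in> lpmln_SM U P"
  shows "I \<subseteq> (\<Union>k\<in>instances U P. set (head (P ! fst k) (snd k)))"
    (is "I \<subseteq> ?A")
proof -
  have "models (I \<inter> ?A) (reduct I (rule_fm P k))" if k: "k \<in> sat_instances U P I" for k
  proof -
    have "models (I \<inter> ?A) (reduct I (head_fm P k)) \<longleftrightarrow> models I (head_fm P k)"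
      using k by (intro models_reduct_cong) (auto simp: head_fm_def set_fm_big_or_Atom sat_instances_def)
    then show ?thesis
      using k models_reduct_imp_models[of "I \<inter> ?A" I "body_fm P k"]
      by (auto simp: sat_instances_def rule_fm_def)
  qed
  then have "\<not> I \<inter> ?A \<subset> I"
    using assms by (auto simp: lpmln_SM_def stable_model_def)
  then show ?thesis
    by blast
qed

lemma finite_lpmln_SM:
  assumes "finite U"
  shows "finite (lpmln_SM U P)"
proof (rule finite_subset)
  show "lpmln_SM U P \<subseteq> Pow (\<Union>k\<in>instances U P. set (head (P ! fst k) (snd k)))"
    using lpmln_SM_subset_head_atoms by blast
  show "finite (Pow (\<Union>k\<in>instances U P. set (head (P ! fst k) (snd k))))"
    using finite_instances[OF assms, of P] by (simp add: finite_UN_I)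
qed

section \<open>Lexicographic maximality\<close>

lemma tendsto_softmax:
  fixes h s :: "'b \<Rightarrow> real"
  assumes "finite M" "I \<in> M"
  defines "q \<equiv> \<lambda>J. if h J = Max (h ` M) then exp (s J) else 0"
  shows "((\<lambda>a. exp (a * h I + s I) / (\<Sum>J\<in>M. exp (a * h J + s J)))
           \<longlongrightarrow> q I / (\<Sum>J\<in>M. q J)) at_top"
proof -
  let ?Hm = "Max (h ` M)"
  have exp_tendsto_0: "((\<lambda>a. exp (a * d + c)) \<longlongrightarrow> 0) at_top" if "d < 0" for d c :: real
    using that by real_asymp
  have lim: "((\<lambda>a. exp (a * (h J - ?Hm) + s J)) \<longlongrightarrow> q J) at_top" if "J \<in> M" for J
  proof (cases "h J = ?Hm")
    case False
    then have "h J - ?Hm < 0"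
      using that assms(1) by (simp add: less_le)
    then show ?thesis
      using False exp_tendsto_0 unfolding q_def by simp
  qed (simp add: q_def)
  obtain J0 where "J0 \<in> M" "h J0 = ?Hm"
    using assms(1,2) Max_in[of "h ` M"] by fastforce
  then have "(\<Sum>J\<in>M. q J) > 0"
    using assms(1) by (intro sum_pos2[of M J0]) (auto simp: q_def)
  then have "((\<lambda>a. exp (a * (h I - ?Hm) + s I) / (\<Sum>J\<in>M. exp (a * (h J - ?Hm) + s J)))
      \<longlongrightarrow> q I / (\<Sum>J\<in>M. q J)) at_top"
    using assms(2) by (intro tendsto_divide tendsto_sum lim) auto
  moreover have "exp (a * (h J - ?Hm) + s J) = exp (a * h J + s J) / exp (a * ?Hm)" for a J
    by (simp add: algebra_simps exp_diff)
  ultimately show ?thesis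
    by (simp add: sum_divide_distrib[symmetric])
qed

lemma Lim_softmax_maximal_iff:
  fixes h s :: "'b \<Rightarrow> real"
  assumes "finite M" "I \<in> M"
  defines "L \<equiv> \<lambda>J. Lim at_top (\<lambda>a. exp (a * h J + s J) / (\<Sum>K\<in>M. exp (a * h K + s K)))"
  shows "(\<forall>J\<in>M. L J \<le> L I) \<longleftrightarrow> (\<forall>J\<in>M. (h J, s J) \<le> (h I, s I))"
proof -
  let ?Hm = "Max (h ` M)"
  define q where "q J = (if h J = ?Hm then exp (s J) else 0)" for J
  have h_le: "h J \<le> ?Hm" if "J \<in> M" for J
    using assms(1) that by simp
  obtain J0 where J0: "J0 \<in> M" "h J0 = ?Hm"
    using assms(1,2) Max_in[of "h ` M"] by fastforce
  have "(\<Sum>J\<in>M. q J) > 0"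
    using assms(1) J0 by (intro sum_pos2[of M J0]) (auto simp: q_def)
  moreover have "L J = q J / (\<Sum>K\<in>M. q K)" if "J \<in> M" for J
    unfolding L_def q_def using tendsto_softmax[OF assms(1) that] by (rule tendsto_Lim[rotated]) simp
  ultimately have "(\<forall>J\<in>M. L J \<le> L I) \<longleftrightarrow> (\<forall>J\<in>M. q J \<le> q I)"
    using assms(2) by (simp add: divide_le_cancel)
  also have "\<dots> \<longleftrightarrow> (\<forall>J\<in>M. (h J, s J) \<le> (h I, s I))"
  proof
    assume q_max: "\<forall>J\<in>M. q J \<le> q I"
    then have "h I = ?Hm"
      using J0 by (fastforce simp: q_def split: if_splits)
    then show "\<forall>J\<in>M. (h J, s J) \<le> (h I, s I)"
      using q_max h_le by (fastforce simp: q_def less_le split: if_splits)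
  next
    assume lex_max: "\<forall>J\<in>M. (h J, s J) \<le> (h I, s I)"
    then have "h I = ?Hm"
      using J0 h_le[OF assms(2)] by fastforce
    then show "\<forall>J\<in>M. q J \<le> q I"
      using lex_max by (auto simp: q_def)
  qed
  finally show ?thesis .
qed

lemma two_level_dominance_iff:
  fixes p p' :: "nat \<Rightarrow> real"
  assumes "\<forall>l>1. p l = 0" "\<forall>l>1. p' l = 0"
  shows "(\<exists>l. p' l < p l \<and> (\<forall>k>l. p' k = p k)) \<longleftrightarrow> (- p 1, - p 0) < (- p' 1, - p' 0)"
proof
  assume "\<exists>l. p' l < p l \<and> (\<forall>k>l. p' k = p k)"
  then obtain l where "p' l < p l" "\<forall>k>l. p' k = p k"
    by blast
  moreover have "l \<le> 1"
    using assms \<open>p' l < p l\<close> by (metis less_irrefl not_le)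
  ultimately show "(- p 1, - p 0) < (- p' 1, - p' 0)"
    by (cases l) auto
next
  assume "(- p 1, - p 0) < (- p' 1, - p' 0)"
  then consider "p' 1 < p 1" | "p' 1 = p 1" "p' 0 < p 0"
    by fastforce
  then show "\<exists>l. p' l < p l \<and> (\<forall>k>l. p' k = p k)"
  proof cases
    case 1
    then show ?thesis
      using assms by (intro exI[of _ 1]) simp
  next
    case 2
    have "p' k = p k" if "k > 0" for k
      using assms 2(1) that by (cases "k = 1") auto
    then show ?thesis
      using 2(2) by blast
  qed
qed

section \<open>Most probable and optimal stable models\<close>

definition hard_weight :: "'c set \<Rightarrow> ('a, 'c) lprog \<Rightarrow> 'a set \<Rightarrow> real" where
  "hard_weight U P I = (\<Sum>k\<in>sat_instances U P I. if wt (P ! fst k) = Hard then 1 else 0)"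

definition soft_weight :: "'c set \<Rightarrow> ('a, 'c) lprog \<Rightarrow> 'a set \<Rightarrow> real" where
  "soft_weight U P I = (\<Sum>k\<in>sat_instances U P I. wval 0 (wt (P ! fst k)))"

definition lpmln_score :: "'c set \<Rightarrow> ('a, 'c) lprog \<Rightarrow> 'a set \<Rightarrow> real \<times> real" where
  "lpmln_score U P I = (hard_weight U P I, soft_weight U P I)"

lemma Sat_in_phi_iff: "Sat i w c \<in> phi U P I \<longleftrightarrow> (i, c) \<in> sat_instances U P I \<and> w = wt (P ! i)"
  by (force simp: phi_def sat_atom_def)

lemma sum_Sat_in_phi:
  "(\<Sum>(i, w, c) \<in> {(i, w, c). Sat i w c \<in> phi U P I}. g i w c)
     = (\<Sum>(i, c) \<in> sat_instances U P I. g i (wt (P ! i)) c)"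
proof -
  have "{(i, w, c). Sat i w c \<in> phi U P I} = (\<lambda>(i, c). (i, wt (P ! i), c)) ` sat_instances U P I"
    by (auto simp: Sat_in_phi_iff)
  moreover have "inj_on (\<lambda>(i, c). (i, wt (P ! i), c)) (sat_instances U P I)"
    by (auto intro: inj_onI)
  ultimately show ?thesis
    by (simp add: sum.reindex split_def)
qed

lemma lpmln_W_eq:
  "I \<in> lpmln_SM U P \<Longrightarrow> lpmln_W U P a I = exp (a * hard_weight U P I + soft_weight U P I)"
proof -
  have "wval a w = a * (if w = Hard then 1 else 0) + wval 0 w" for w
    by (cases w) simp_all
  then show "I \<in> lpmln_SM U P \<Longrightarrow> ?thesis"
    by (simp add: lpmln_W_def hard_weight_def soft_weight_def sum.distrib sum_distrib_left)
qed

lemma most_probable_iff: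
  assumes "finite U" "I \<in> lpmln_SM U P"
  shows "I \<in> most_probable U P \<longleftrightarrow> (\<forall>J\<in>lpmln_SM U P. lpmln_score U P J \<le> lpmln_score U P I)"
proof -
  have "lpmln_P U P J = Lim at_top (\<lambda>a. exp (a * hard_weight U P J + soft_weight U P J) /
      (\<Sum>K\<in>lpmln_SM U P. exp (a * hard_weight U P K + soft_weight U P K)))"
    if "J \<in> lpmln_SM U P" for J
    using that by (simp add: lpmln_P_def lpmln_W_eq cong: sum.cong)
  then show ?thesis
    using Lim_softmax_maximal_iff[OF finite_lpmln_SM[OF assms(1)] assms(2),
        of "hard_weight U P" "soft_weight U P"] assms(2)
    by (simp add: most_probable_def lpmln_score_def)
qed

lemma penalty_rwd_wc_phi:
  assumes "finite U"
  shows "penalty (rwd_wc U P) (phi U P I) l =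
    (if l = 0 then - soft_weight U P I else if l = 1 then - hard_weight U P I else 0)"
proof -
  let ?w = "\<lambda>k. wt (P ! fst k)"
  let ?f = "\<lambda>k. (Atom (sat_atom P k), wc_weight (?w k), wc_level (?w k), k)"
  have violated: "{(F, w, l', t). (F, w, l', t) \<in> rwd_wc U P \<and> l' = l \<and> models (phi U P I) F}
      = ?f ` {k \<in> sat_instances U P I. wc_level (?w k) = l}"
    by (auto simp: rwd_wc_def sat_instances_def)
  have inj: "inj_on ?f A" for A
    by (rule inj_onI) simp
  have "penalty (rwd_wc U P) (phi U P I) l
      = (\<Sum>k | k \<in> sat_instances U P I \<and> wc_level (?w k) = l. wc_weight (?w k))"
    unfolding penalty_def violated sum.reindex[OF inj] by simp
  also have "\<dots> = (\<Sum>k\<in>sat_instances U P I. if wc_level (?w k) = l then wc_weight (?w k) else 0)"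
    by (rule sum.inter_filter[OF finite_sat_instances[OF assms]])
  also have "\<dots> = (if l = 0 then - soft_weight U P I else if l = 1 then - hard_weight U P I else 0)"
  proof -
    have "(if wc_level w = l then wc_weight w else 0) =
        (if l = 0 then - wval 0 w else if l = 1 then - (if w = Hard then 1 else 0) else 0)" for w
      by (cases w) auto
    then show ?thesis
      by (simp add: hard_weight_def soft_weight_def sum_negf)
  qed
  finally show ?thesis .
qed

lemma dominated_by_phi_iff:
  assumes "finite U"
  shows "dominated_by (rwd_wc U P) (phi U P I) (phi U P J) \<longleftrightarrow> lpmln_score U P I < lpmln_score U P J"
  unfolding dominated_by_def
  by (subst two_level_dominance_iff) (simp_all add: penalty_rwd_wc_phi[OF assms] lpmln_score_def)

lemma phi_in_optimal_models_iff:
  assumes "finite U" "I \<in> lpmln_SM U P"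
  shows "phi U P I \<in> optimal_models (rwd_rules U P) (rwd_wc U P) \<longleftrightarrow>
    (\<forall>J\<in>lpmln_SM U P. lpmln_score U P J \<le> lpmln_score U P I)"
proof -
  have stable_iff: "stable_model (rwd_rules U P) J \<longleftrightarrow> J \<in> phi U P ` lpmln_SM U P" for J
    using stable_models_rwd_rules_eq[of U P] by blast
  show ?thesis
    using assms(2) by (auto simp: optimal_models_def stable_iff dominated_by_phi_iff[OF assms(1)] not_less)
qed

lemma image_phi_most_probable:
  assumes "finite U"
  shows "phi U P ` most_probable U P = optimal_models (rwd_rules U P) (rwd_wc U P)"
proof -
  have "I \<in> most_probable U P \<longleftrightarrow> phi U P I \<in> optimal_models (rwd_rules U P) (rwd_wc U P)"
    if "I \<in> lpmln_SM U P" for I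
    using most_probable_iff[OF assms that] phi_in_optimal_models_iff[OF assms that] by simp
  moreover have "most_probable U P \<subseteq> lpmln_SM U P"
    by (auto simp: most_probable_def)
  moreover have "optimal_models (rwd_rules U P) (rwd_wc U P) \<subseteq> phi U P ` lpmln_SM U P"
    using stable_models_rwd_rules_eq[of U P] by (auto simp: optimal_models_def)
  ultimately show ?thesis
    by blast
qed

theorem theorem2:
  fixes U :: "'c set" and P :: "('a, 'c) lprog"
  assumes "finite U"
  shows "bij_betw (phi U P) (lpmln_SM U P) {J. stable_model (rwd_rules U P) J}
       \<and> (\<forall>I \<in> lpmln_SM U P. \<forall>a::real.
             lpmln_W U P a I = exp (\<Sum>(i, w, c) \<in> {(i, w, c). Sat i w c \<in> phi U P I}. wval a w))
       \<and> bij_betw (phi U P) (most_probable U P) (optimal_models (rwd_rules U P) (rwd_wc U P))"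
proof (intro conjI ballI allI)
  show "bij_betw (phi U P) (lpmln_SM U P) {J. stable_model (rwd_rules U P) J}"
    by (rule bij_betw_phi_stable_models)
  then show "bij_betw (phi U P) (most_probable U P) (optimal_models (rwd_rules U P) (rwd_wc U P))"
    by (rule bij_betw_subset[OF _ _ image_phi_most_probable[OF assms]]) (auto simp: most_probable_def)
  show "lpmln_W U P a I = exp (\<Sum>(i, w, c) \<in> {(i, w, c). Sat i w c \<in> phi U P I}. wval a w)"
    if "I \<in> lpmln_SM U P" for I a
    using that unfolding lpmln_W_def sum_Sat_in_phi by (simp add: split_def)
qed

end
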